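(* Let $G$ be a non-amenable group and $m\in\mathbb{N}$. (i) If every $m$-generated subgroup of $G$ is amenable, then $\mathcal{T}(G)\geq m+3$. (ii) If every $m$-generated subgroup of $G$ is finite, then $\mathcal{T}(G)\geq 2m+4$.
   Context: A group $G$ admits a paradoxical decomposition if there exist positive integers $m,n$, pairwise disjoint subsets $P_1,\ldots,P_m,Q_1,\ldots,Q_n$ of $G$ and elements $g_1,\ldots,g_m,h_1,\ldots,h_n\in G$ with $G=\bigcup_iP_ig_i=\bigcup_jQ_jh_j$; this happens iff $G$ is non-amenable. The Tarski number $\mathcal{T}(G)$ is the minimal value of $m+n$. *)

theory Defs
  imports "HOL-Algebra.Algebra" "HOL-Library.Extended_Nat"
begin

definition amenable :: "('a, 'b) monoid_scheme \<Rightarrow> bool" where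
  "amenable G \<longleftrightarrow> (\<exists>\<mu> :: 'a set \<Rightarrow> real.
      (\<forall>A. A \<subseteq> carrier G \<longrightarrow> \<mu> A \<ge> 0)
    \<and> \<mu> (carrier G) = 1
    \<and> (\<forall>A B. A \<subseteq> carrier G \<longrightarrow> B \<subseteq> carrier G \<longrightarrow> A \<inter> B = {}
           \<longrightarrow> \<mu> (A \<union> B) = \<mu> A + \<mu> B)
    \<and> (\<forall>g A. g \<in> carrier G \<longrightarrow> A \<subseteq> carrier G \<longrightarrow> \<mu> (l_coset G g A) = \<mu> A))"

definition paradoxical_decomposition :: "('a, 'b) monoid_scheme \<Rightarrow> nat \<Rightarrow> nat \<Rightarrow> bool" where
  "paradoxical_decomposition G m n \<longleftrightarrow> m \<ge> 1 \<and> n \<ge> 1 \<and>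
    (\<exists>(P :: nat \<Rightarrow> 'a set) (Q :: nat \<Rightarrow> 'a set) (g :: nat \<Rightarrow> 'a) (h :: nat \<Rightarrow> 'a).
        (\<forall>i<m. P i \<subseteq> carrier G \<and> g i \<in> carrier G)
      \<and> (\<forall>j<n. Q j \<subseteq> carrier G \<and> h j \<in> carrier G)
      \<and> (\<forall>i<m. \<forall>i'<m. i \<noteq> i' \<longrightarrow> P i \<inter> P i' = {})
      \<and> (\<forall>j<n. \<forall>j'<n. j \<noteq> j' \<longrightarrow> Q j \<inter> Q j' = {})
      \<and> (\<forall>i<m. \<forall>j<n. P i \<inter> Q j = {})
      \<and> carrier G = (\<Union>i<m. r_coset G (P i) (g i))
      \<and> carrier G = (\<Union>j<n. r_coset G (Q j) (h j)))"

text \<open>Tarski number: minimal m+n; infinity if there is no paradoxical decomposition.\<close>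
definition tarski_number :: "('a, 'b) monoid_scheme \<Rightarrow> enat" where
  "tarski_number G = Inf {enat (m + n) | m n. paradoxical_decomposition G m n}"

definition m_generated_subgroup :: "('a, 'b) monoid_scheme \<Rightarrow> nat \<Rightarrow> 'a set \<Rightarrow> bool" where
  "m_generated_subgroup G m H \<longleftrightarrow>
     (\<exists>S. S \<subseteq> carrier G \<and> finite S \<and> card S \<le> m \<and> H = generate G S)"

end

theory Submission
  imports Defs "HOL-Library.Disjoint_Sets"
begin

text \<open>Right-multiplying all translations of one half of a paradoxical decomposition by the
  inverse of one of them preserves the covering, so the translations of a half with \<open>p\<close> pieces
  lie in a subgroup generated by \<open>p - 1\<close> elements. If all translations lie in a subgroup \<open>H\<close>,
  every left coset \<open>xH\<close> is covered by the translates of the traces of the pieces on \<open>xH\<close>.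
  For amenable \<open>H\<close>, composing a left-invariant mean on \<open>H\<close> with inversion gives a
  right-invariant one, under which both halves have mass at least \<open>1\<close> in \<open>H\<close>: absurd. So a
  decomposition into \<open>p + q\<close> pieces needs \<open>p + q - 2 > m\<close>. For finite \<open>H\<close>, counting in
  \<open>xH\<close> shows that the pieces of a single half already cover \<open>G\<close>, leaving nothing for the
  other half; so both halves have more than \<open>m + 1\<close> pieces.\<close>

locale finitely_additive_measure =
  fixes \<mu> :: "'a set \<Rightarrow> real" and \<Omega> :: "'a set"
  assumes nonneg: "A \<subseteq> \<Omega> \<Longrightarrow> 0 \<le> \<mu> A"
    and additive: "A \<subseteq> \<Omega> \<Longrightarrow> B \<subseteq> \<Omega> \<Longrightarrow> A \<inter> B = {} \<Longrightarrow> \<mu> (A \<union> B) = \<mu> A + \<mu> B"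
begin

lemma empty [simp]: "\<mu> {} = 0"
  using additive[of "{}" "{}"] by simp

lemma mono:
  assumes "A \<subseteq> B" "B \<subseteq> \<Omega>"
  shows "\<mu> A \<le> \<mu> B"
proof -
  have "B - A \<subseteq> \<Omega>" "A \<subseteq> \<Omega>"
    using assms by auto
  then have "\<mu> B = \<mu> A + \<mu> (B - A)"
    using additive[of A "B - A"] assms by (simp add: Un_absorb1)
  with nonneg[OF \<open>B - A \<subseteq> \<Omega>\<close>] show ?thesis by simp
qed

lemma union_le:
  assumes "A \<subseteq> \<Omega>" "B \<subseteq> \<Omega>"
  shows "\<mu> (A \<union> B) \<le> \<mu> A + \<mu> B"
proof -
  have "B - A \<subseteq> \<Omega>"
    using assms by auto
  then show ?thesis
    using additive[of A "B - A"] mono[of "B - A" B] assms by simp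
qed

lemma UN_le:
  assumes "finite I" "\<And>i. i \<in> I \<Longrightarrow> A i \<subseteq> \<Omega>"
  shows "\<mu> (\<Union>i\<in>I. A i) \<le> (\<Sum>i\<in>I. \<mu> (A i))"
  using assms
proof (induction I rule: finite_induct)
  case (insert i I)
  from insert.prems
  have "\<mu> (\<Union>j\<in>insert i I. A j) \<le> \<mu> (A i) + \<mu> (\<Union>j\<in>I. A j)"
    by (auto intro: union_le)
  with insert show ?case by simp
qed simp

lemma UN_eq:
  assumes "finite I" "\<And>i. i \<in> I \<Longrightarrow> A i \<subseteq> \<Omega>" "disjoint_family_on A I"
  shows "\<mu> (\<Union>i\<in>I. A i) = (\<Sum>i\<in>I. \<mu> (A i))"
  using assms
proof (induction I rule: finite_induct)
  case (insert i I)
  from insert.prems insert.hyps(2)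
  have "\<mu> (\<Union>j\<in>insert i I. A j) = \<mu> (A i) + \<mu> (\<Union>j\<in>I. A j)"
    by (auto intro: additive simp: disjoint_family_on_insert)
  with insert show ?case by (simp add: disjoint_family_on_insert)
qed simp

end

lemma finitely_additive_measure_card:
  "finite \<Omega> \<Longrightarrow> finitely_additive_measure (\<lambda>A. real (card A)) \<Omega>"
  by unfold_locales (auto simp: card_Un_disjoint rev_finite_subset)

lemma amenableE:
  assumes "amenable G"
  obtains \<mu> where "finitely_additive_measure \<mu> (carrier G)" "\<mu> (carrier G) = 1"
    "\<And>g A. g \<in> carrier G \<Longrightarrow> A \<subseteq> carrier G \<Longrightarrow> \<mu> (l_coset G g A) = \<mu> A"
proof -
  obtain \<mu> :: "'a set \<Rightarrow> real" where
    "\<forall>A. A \<subseteq> carrier G \<longrightarrow> 0 \<le> \<mu> A" "\<mu> (carrier G) = 1"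
    "\<forall>A B. A \<subseteq> carrier G \<longrightarrow> B \<subseteq> carrier G \<longrightarrow> A \<inter> B = {}
       \<longrightarrow> \<mu> (A \<union> B) = \<mu> A + \<mu> B"
    "\<forall>g A. g \<in> carrier G \<longrightarrow> A \<subseteq> carrier G \<longrightarrow> \<mu> (l_coset G g A) = \<mu> A"
    using assms unfolding amenable_def by (elim exE conjE) (rule that; assumption)
  then show thesis
    by (intro that[of \<mu>] finitely_additive_measure.intro) auto
qed

context group
begin

lemma right_translate_cover_shift:
  assumes "c \<in> carrier G" "\<And>i. i \<in> I \<Longrightarrow> P i \<subseteq> carrier G \<and> g i \<in> carrier G"
    and "carrier G = (\<Union>i\<in>I. P i #> g i)"
  shows "carrier G = (\<Union>i\<in>I. P i #> (g i \<otimes> c))"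
proof -
  have "carrier G = carrier G #> c"
    using subgroup.rcos_const[OF subgroup_self is_group assms(1)] by simp
  also have "\<dots> = (\<Union>i\<in>I. P i #> g i) #> c"
    using assms(3) by simp
  also have "\<dots> = (\<Union>i\<in>I. (P i #> g i) #> c)"
    by (auto simp: r_coset_def)
  also have "\<dots> = (\<Union>i\<in>I. P i #> (g i \<otimes> c))"
    using assms(1,2) by (simp add: coset_mult_assoc)
  finally show ?thesis .
qed

lemma right_translate_cover_few_generators:
  assumes "finite I" "I \<noteq> {}" "\<And>i. i \<in> I \<Longrightarrow> P i \<subseteq> carrier G \<and> g i \<in> carrier G"
    and "carrier G = (\<Union>i\<in>I. P i #> g i)"
  obtains T g' where "T \<subseteq> carrier G" "finite T" "card T < card I"
    "\<And>i. i \<in> I \<Longrightarrow> g' i \<in> generate G T" "carrier G = (\<Union>i\<in>I. P i #> g' i)"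
proof -
  obtain i\<^sub>0 where i\<^sub>0: "i\<^sub>0 \<in> I" using assms(2) by blast
  define g' where "g' i = g i \<otimes> inv g i\<^sub>0" for i
  define T where "T = g' ` (I - {i\<^sub>0})"
  have g'_carrier: "g' i \<in> carrier G" if "i \<in> I" for i
    using assms(3) i\<^sub>0 that by (simp add: g'_def)
  have "card T \<le> card (I - {i\<^sub>0})"
    unfolding T_def by (rule card_image_le) (use assms(1) in simp)
  also have "\<dots> < card I"
    by (rule card_Diff1_less[OF assms(1) i\<^sub>0])
  finally have "card T < card I" .
  moreover have "g' i \<in> generate G T" if "i \<in> I" for i
  proof (cases "i = i\<^sub>0")
    case True
    then show ?thesis using assms(3) i\<^sub>0 by (simp add: g'_def generate.one)
  next
    case False
    then show ?thesis using that by (auto simp: T_def intro: generate.incl)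
  qed
  moreover have "carrier G = (\<Union>i\<in>I. P i #> g' i)"
    unfolding g'_def using assms(3) i\<^sub>0 by (intro right_translate_cover_shift[OF _ assms(3,4)]) auto
  moreover have "T \<subseteq> carrier G" "finite T"
    using g'_carrier assms(1) by (auto simp: T_def)
  ultimately show thesis using that by blast
qed

lemma translates_cover_lcoset_measure_le:
  assumes K: "subgroup K G" and x: "x \<in> carrier G"
    and \<mu>: "finitely_additive_measure \<mu> (x <# K)"
    and invariant: "\<And>A c. A \<subseteq> x <# K \<Longrightarrow> c \<in> K \<Longrightarrow> \<mu> (A #> c) = \<mu> A"
    and I: "finite I" and pieces: "\<And>i. i \<in> I \<Longrightarrow> P i \<subseteq> carrier G \<and> g i \<in> K"
    and disjoint: "disjoint_family_on P I" and cover: "carrier G = (\<Union>i\<in>I. P i #> g i)"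
  shows "\<mu> (x <# K) \<le> \<mu> (\<Union>i\<in>I. P i \<inter> (x <# K))"
proof -
  define C where "C = x <# K"
  interpret \<mu>: finitely_additive_measure \<mu> C
    using \<mu> unfolding C_def .
  have KG: "K \<subseteq> carrier G"
    using K by (rule subgroup.subset)
  have C_rcos: "C #> c = C" if "c \<in> K" for c
    using coset_assoc[OF x _ KG, of c] subgroup.rcos_const[OF K is_group that] that KG
    unfolding C_def by auto
  have translate_in_C: "(P i \<inter> C) #> g i \<subseteq> C" if "i \<in> I" for i
    using C_rcos[of "g i"] pieces[OF that] unfolding r_coset_def by auto
  have C_cover: "C \<subseteq> (\<Union>i\<in>I. (P i \<inter> C) #> g i)"
  proof
    fix y assume y: "y \<in> C"
    then have "y \<in> carrier G"
      using l_coset_carrier[OF _ x K] by (simp add: C_def)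
    with cover obtain i p where i: "i \<in> I" "p \<in> P i" "y = p \<otimes> g i"
      unfolding r_coset_def by auto
    have p: "p \<in> carrier G" "g i \<in> carrier G"
      using i pieces KG by auto
    have "p = y \<otimes> inv g i"
      using i(3) p by (simp add: m_assoc)
    also have "\<dots> \<in> C #> inv g i"
      using y p KG by (intro rcosI) (auto simp: C_def l_coset_subset_G x)
    also have "\<dots> = C"
      using C_rcos subgroup.m_inv_closed[OF K] pieces i(1) by simp
    finally show "y \<in> (\<Union>i\<in>I. (P i \<inter> C) #> g i)"
      using i by (auto simp: r_coset_def)
  qed
  have "\<mu> C \<le> \<mu> (\<Union>i\<in>I. (P i \<inter> C) #> g i)"
    using C_cover translate_in_C by (intro \<mu>.mono) auto
  also have "\<dots> \<le> (\<Sum>i\<in>I. \<mu> ((P i \<inter> C) #> g i))"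
    using translate_in_C by (intro \<mu>.UN_le I)
  also have "\<dots> = (\<Sum>i\<in>I. \<mu> (P i \<inter> C))"
    using invariant pieces by (intro sum.cong) (auto simp: C_def)
  also have "\<dots> = \<mu> (\<Union>i\<in>I. P i \<inter> C)"
    using disjoint by (intro \<mu>.UN_eq[symmetric] I) (auto simp: disjoint_family_on_def)
  finally show ?thesis unfolding C_def .
qed

lemma card_r_coset:
  assumes "A \<subseteq> carrier G" "c \<in> carrier G"
  shows "card (A #> c) = card A"
proof -
  have "A #> c = (\<lambda>a. a \<otimes> c) ` A"
    by (auto simp: r_coset_def)
  moreover have "inj_on (\<lambda>a. a \<otimes> c) A"
    using assms by (intro inj_onI) (metis r_cancel subsetD)
  ultimately show ?thesis
    by (simp add: card_image)
qed

lemma finite_subgroup_translates_cover_pieces: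
  assumes K: "subgroup K G" "finite K" and I: "finite I"
    and pieces: "\<And>i. i \<in> I \<Longrightarrow> P i \<subseteq> carrier G \<and> g i \<in> K"
    and disjoint: "disjoint_family_on P I" and cover: "carrier G = (\<Union>i\<in>I. P i #> g i)"
  shows "carrier G \<subseteq> (\<Union>i\<in>I. P i)"
proof
  fix x assume x: "x \<in> carrier G"
  have KG: "K \<subseteq> carrier G"
    using K(1) by (rule subgroup.subset)
  have finite_coset: "finite (x <# K)"
    using K(2) by (simp add: l_coset_def)
  have card_invariant: "real (card (A #> c)) = real (card A)" if "A \<subseteq> x <# K" "c \<in> K" for A c
    using that KG l_coset_subset_G[OF KG x] by (subst card_r_coset) auto
  have "real (card (x <# K)) \<le> real (card (\<Union>i\<in>I. P i \<inter> (x <# K)))"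
    by (rule translates_cover_lcoset_measure_le[OF K(1) x
          finitely_additive_measure_card[OF finite_coset] card_invariant I pieces disjoint cover])
  then have "(\<Union>i\<in>I. P i \<inter> (x <# K)) = x <# K"
    using finite_coset by (intro card_seteq) auto
  moreover have "x \<in> x <# K"
    using x subgroup.one_closed[OF K(1)] by (force simp: l_coset_def)
  ultimately show "x \<in> (\<Union>i\<in>I. P i)"
    by blast
qed

lemma amenable_subgroup_right_invariant_measure:
  assumes H: "subgroup H G" and amenable: "amenable (G\<lparr>carrier := H\<rparr>)"
  obtains \<nu> where "finitely_additive_measure \<nu> H" "\<nu> H = 1"
    "\<And>A c. A \<subseteq> H \<Longrightarrow> c \<in> H \<Longrightarrow> \<nu> (A #> c) = \<nu> A"
proof -
  obtain \<mu> where \<mu>: "finitely_additive_measure \<mu> H" and "\<mu> H = 1"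
    and left_invariant: "\<And>c A. c \<in> H \<Longrightarrow> A \<subseteq> H \<Longrightarrow> \<mu> (c <# A) = \<mu> A"
    using amenableE[OF amenable] by auto
  interpret \<mu>: finitely_additive_measure \<mu> H
    by (rule \<mu>)
  have HG: "H \<subseteq> carrier G"
    using H by (rule subgroup.subset)
  have inv_subset: "m_inv G ` A \<subseteq> H" if "A \<subseteq> H" for A
    using that subgroup.m_inv_closed[OF H] by blast
  have inv_H: "m_inv G ` H = H"
  proof
    show "H \<subseteq> m_inv G ` H"
    proof
      fix x assume "x \<in> H"
      then show "x \<in> m_inv G ` H"
        using HG subgroup.m_inv_closed[OF H] by (intro image_eqI[of _ _ "inv x"]) auto
    qed
  qed (rule inv_subset[OF order_refl])
  have inv_r_coset: "m_inv G ` (A #> c) = inv c <# m_inv G ` A" if "A \<subseteq> H" "c \<in> H" for A c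
  proof -
    have "m_inv G ` (A #> c) = (\<lambda>a. inv (a \<otimes> c)) ` A"
      by (auto simp: r_coset_def)
    also have "\<dots> = (\<lambda>a. inv c \<otimes> inv a) ` A"
      using that HG by (intro image_cong) (auto simp: inv_mult_group subset_iff)
    also have "\<dots> = inv c <# m_inv G ` A"
      by (auto simp: l_coset_def)
    finally show ?thesis .
  qed
  define \<nu> where "\<nu> A = \<mu> (m_inv G ` A)" for A
  show thesis
  proof (rule that[of \<nu>])
    show "finitely_additive_measure \<nu> H"
    proof
      fix A B assume A: "A \<subseteq> H" and B: "B \<subseteq> H"
      show "0 \<le> \<nu> A"
        unfolding \<nu>_def using A by (intro \<mu>.nonneg inv_subset)
      assume "A \<inter> B = {}"
      then have "m_inv G ` A \<inter> m_inv G ` B = {}"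
        using inj_on_image_Int[OF inv_inj, of A B] A B HG by auto
      then show "\<nu> (A \<union> B) = \<nu> A + \<nu> B"
        unfolding \<nu>_def image_Un using A B by (intro \<mu>.additive inv_subset)
    qed
    show "\<nu> H = 1"
      unfolding \<nu>_def inv_H by fact
    show "\<nu> (A #> c) = \<nu> A" if "A \<subseteq> H" "c \<in> H" for A c
      unfolding \<nu>_def inv_r_coset[OF that] using that
      by (intro left_invariant inv_subset subgroup.m_inv_closed[OF H])
  qed
qed

lemma amenable_subgroup_no_paradoxical_translates:
  assumes H: "subgroup H G" "amenable (G\<lparr>carrier := H\<rparr>)"
    and I: "finite I" and J: "finite J"
    and P: "\<And>i. i \<in> I \<Longrightarrow> P i \<subseteq> carrier G \<and> g i \<in> H"
    and Q: "\<And>j. j \<in> J \<Longrightarrow> Q j \<subseteq> carrier G \<and> h j \<in> H"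
    and disjoint: "disjoint_family_on P I" "disjoint_family_on Q J"
      "\<And>i j. i \<in> I \<Longrightarrow> j \<in> J \<Longrightarrow> P i \<inter> Q j = {}"
    and cover: "carrier G = (\<Union>i\<in>I. P i #> g i)" "carrier G = (\<Union>j\<in>J. Q j #> h j)"
  shows False
proof -
  obtain \<nu> where \<nu>: "finitely_additive_measure \<nu> H" and "\<nu> H = 1"
    and invariant: "\<And>A c. A \<subseteq> H \<Longrightarrow> c \<in> H \<Longrightarrow> \<nu> (A #> c) = \<nu> A"
    using amenable_subgroup_right_invariant_measure[OF H] by blast
  interpret \<nu>: finitely_additive_measure \<nu> H
    by (rule \<nu>)
  have H_coset: "\<one> <# H = H"
    using H(1) by (simp add: lcos_mult_one subgroup.subset)
  have "\<nu> H \<le> \<nu> (\<Union>i\<in>I. P i \<inter> H)"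
    by (rule translates_cover_lcoset_measure_le[OF H(1) one_closed _ _ I P disjoint(1) cover(1),
          unfolded H_coset]) (use \<nu> invariant in auto)
  moreover have "\<nu> H \<le> \<nu> (\<Union>j\<in>J. Q j \<inter> H)"
    by (rule translates_cover_lcoset_measure_le[OF H(1) one_closed _ _ J Q disjoint(2) cover(2),
          unfolded H_coset]) (use \<nu> invariant in auto)
  moreover have "\<nu> (\<Union>i\<in>I. P i \<inter> H) + \<nu> (\<Union>j\<in>J. Q j \<inter> H)
      = \<nu> ((\<Union>i\<in>I. P i \<inter> H) \<union> (\<Union>j\<in>J. Q j \<inter> H))"
    using disjoint(3) by (intro \<nu>.additive[symmetric]) auto
  moreover have "\<dots> \<le> \<nu> H"
    by (intro \<nu>.mono) auto
  ultimately show False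
    using \<open>\<nu> H = 1\<close> by linarith
qed

end


lemma paradoxical_decompositionE:
  assumes "paradoxical_decomposition G m n"
  obtains P g Q h where "0 < m" "0 < n"
    "\<And>i. i < m \<Longrightarrow> P i \<subseteq> carrier G \<and> g i \<in> carrier G"
    "\<And>j. j < n \<Longrightarrow> Q j \<subseteq> carrier G \<and> h j \<in> carrier G"
    "disjoint_family_on P {..<m}" "disjoint_family_on Q {..<n}"
    "\<And>i j. i < m \<Longrightarrow> j < n \<Longrightarrow> P i \<inter> Q j = {}"
    "carrier G = (\<Union>i<m. P i #>\<^bsub>G\<^esub> g i)" "carrier G = (\<Union>j<n. Q j #>\<^bsub>G\<^esub> h j)"
proof -
  obtain P Q g h where
    pieces: "\<forall>i<m. P i \<subseteq> carrier G \<and> g i \<in> carrier G"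
      "\<forall>j<n. Q j \<subseteq> carrier G \<and> h j \<in> carrier G"
    and disjoint: "\<forall>i<m. \<forall>i'<m. i \<noteq> i' \<longrightarrow> P i \<inter> P i' = {}"
      "\<forall>j<n. \<forall>j'<n. j \<noteq> j' \<longrightarrow> Q j \<inter> Q j' = {}" "\<forall>i<m. \<forall>j<n. P i \<inter> Q j = {}"
    and cover: "carrier G = (\<Union>i<m. P i #>\<^bsub>G\<^esub> g i)" "carrier G = (\<Union>j<n. Q j #>\<^bsub>G\<^esub> h j)"
    using assms unfolding paradoxical_decomposition_def by (elim conjE exE) (rule that; assumption)
  show thesis
  proof (rule that[OF _ _ _ _ _ _ _ cover])
    show "0 < m" "0 < n"
      using assms by (auto simp: paradoxical_decomposition_def)
  qed (use pieces disjoint in \<open>auto simp: disjoint_family_on_def\<close>)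
qed

lemma paradoxical_decomposition_sym:
  assumes "paradoxical_decomposition G m n"
  shows "paradoxical_decomposition G n m"
  using assms unfolding paradoxical_decomposition_def
  apply (elim conjE exE)
  subgoal for P Q g h
    apply (intro conjI, assumption, assumption)
    apply (rule exI[of _ Q], rule exI[of _ P], rule exI[of _ h], rule exI[of _ g])
    by (intro conjI; (assumption | metis Int_commute))
  done

lemma tarski_number_geI:
  assumes "\<And>m n. paradoxical_decomposition G m n \<Longrightarrow> k \<le> m + n"
  shows "enat k \<le> tarski_number G"
  unfolding tarski_number_def using assms by (auto intro!: Inf_greatest)

context group
begin

lemma paradoxical_decomposition_amenable_bound:
  assumes pd: "paradoxical_decomposition G m n"
    and amenable: "\<forall>H. m_generated_subgroup G k H \<longrightarrow> amenable (G\<lparr>carrier := H\<rparr>)"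
  shows "k + 3 \<le> m + n"
proof (rule ccontr)
  assume small: "\<not> k + 3 \<le> m + n"
  obtain P Q g h where "0 < m" "0 < n"
    and P: "\<And>i. i < m \<Longrightarrow> P i \<subseteq> carrier G \<and> g i \<in> carrier G"
    and Q: "\<And>j. j < n \<Longrightarrow> Q j \<subseteq> carrier G \<and> h j \<in> carrier G"
    and disjoint: "disjoint_family_on P {..<m}" "disjoint_family_on Q {..<n}"
      "\<And>i j. i < m \<Longrightarrow> j < n \<Longrightarrow> P i \<inter> Q j = {}"
    and cover: "carrier G = (\<Union>i<m. P i #> g i)" "carrier G = (\<Union>j<n. Q j #> h j)"
    by (fact paradoxical_decompositionE[OF pd])
  obtain S g' where S: "S \<subseteq> carrier G" "finite S" "card S < card {..<m}"
    and g': "\<And>i. i \<in> {..<m} \<Longrightarrow> g' i \<in> generate G S"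
    and cover_g': "carrier G = (\<Union>i\<in>{..<m}. P i #> g' i)"
    by (rule right_translate_cover_few_generators[OF _ _ _ cover(1)]) (use P \<open>0 < m\<close> in auto)
  obtain T h' where T: "T \<subseteq> carrier G" "finite T" "card T < card {..<n}"
    and h': "\<And>j. j \<in> {..<n} \<Longrightarrow> h' j \<in> generate G T"
    and cover_h': "carrier G = (\<Union>j\<in>{..<n}. Q j #> h' j)"
    by (rule right_translate_cover_few_generators[OF _ _ _ cover(2)]) (use Q \<open>0 < n\<close> in auto)
  define H where "H = generate G (S \<union> T)"
  have "card (S \<union> T) \<le> k"
    using card_Un_le[of S T] S(3) T(3) small by simp
  then have "m_generated_subgroup G k H"
    unfolding m_generated_subgroup_def H_def using S T by blast
  then have H_amenable: "amenable (G\<lparr>carrier := H\<rparr>)"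
    using amenable by blast
  have H_subgroup: "subgroup H G"
    unfolding H_def using S T by (intro generate_is_subgroup) auto
  have g'_H: "g' i \<in> H" if "i < m" for i
    using g' that mono_generate[of S "S \<union> T"] unfolding H_def by auto
  have h'_H: "h' j \<in> H" if "j < n" for j
    using h' that mono_generate[of T "S \<union> T"] unfolding H_def by auto
  show False
    by (rule amenable_subgroup_no_paradoxical_translates[OF H_subgroup H_amenable
          finite_lessThan finite_lessThan _ _ disjoint(1,2) _ cover_g' cover_h'])
      (use P Q g'_H h'_H disjoint(3) in auto)
qed

lemma paradoxical_decomposition_finite_bound:
  assumes pd: "paradoxical_decomposition G m n"
    and finite: "\<forall>H. m_generated_subgroup G k H \<longrightarrow> finite H"
  shows "k + 2 \<le> m"
proof (rule ccontr)
  assume small: "\<not> k + 2 \<le> m"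
  obtain P Q g h where "0 < m" "0 < n"
    and P: "\<And>i. i < m \<Longrightarrow> P i \<subseteq> carrier G \<and> g i \<in> carrier G"
    and Q: "\<And>j. j < n \<Longrightarrow> Q j \<subseteq> carrier G \<and> h j \<in> carrier G"
    and disjoint: "disjoint_family_on P {..<m}" "disjoint_family_on Q {..<n}"
      "\<And>i j. i < m \<Longrightarrow> j < n \<Longrightarrow> P i \<inter> Q j = {}"
    and cover: "carrier G = (\<Union>i<m. P i #> g i)" "carrier G = (\<Union>j<n. Q j #> h j)"
    by (fact paradoxical_decompositionE[OF pd])
  obtain S g' where S: "S \<subseteq> carrier G" "finite S" "card S < card {..<m}"
    and g': "\<And>i. i \<in> {..<m} \<Longrightarrow> g' i \<in> generate G S"
    and cover_g': "carrier G = (\<Union>i\<in>{..<m}. P i #> g' i)"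
    by (rule right_translate_cover_few_generators[OF _ _ _ cover(1)]) (use P \<open>0 < m\<close> in auto)
  define K where "K = generate G S"
  have "m_generated_subgroup G k K"
    unfolding m_generated_subgroup_def K_def using S small by auto
  then have K_finite: "finite K"
    using finite by blast
  have K_subgroup: "subgroup K G"
    unfolding K_def using S(1) by (rule generate_is_subgroup)
  have P_cover: "carrier G \<subseteq> (\<Union>i<m. P i)"
    by (rule finite_subgroup_translates_cover_pieces[OF K_subgroup K_finite finite_lessThan _
          disjoint(1) cover_g']) (use P g' in \<open>auto simp: K_def\<close>)
  have "\<one> \<in> (\<Union>j<n. Q j #> h j)"
    using cover(2) one_closed by blast
  then obtain j q where "j < n" "q \<in> Q j"
    by (auto simp: r_coset_def)
  moreover from this obtain i where "i < m" "q \<in> P i"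
    using P_cover Q by blast
  ultimately show False
    using disjoint(3) by blast
qed

end

theorem corollary4p2:
  fixes G :: "('a, 'b) monoid_scheme" and m :: nat
  assumes "group G" and "\<not> amenable G"
  shows "((\<forall>H. m_generated_subgroup G m H \<longrightarrow> amenable (G\<lparr>carrier := H\<rparr>))
            \<longrightarrow> tarski_number G \<ge> enat (m + 3))
       \<and> ((\<forall>H. m_generated_subgroup G m H \<longrightarrow> finite H)
            \<longrightarrow> tarski_number G \<ge> enat (2 * m + 4))"
proof (intro conjI impI)
  assume amenable: "\<forall>H. m_generated_subgroup G m H \<longrightarrow> amenable (G\<lparr>carrier := H\<rparr>)"
  show "tarski_number G \<ge> enat (m + 3)"
    by (rule tarski_number_geI)
      (rule group.paradoxical_decomposition_amenable_bound[OF assms(1) _ amenable])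
next
  assume finite: "\<forall>H. m_generated_subgroup G m H \<longrightarrow> finite H"
  show "tarski_number G \<ge> enat (2 * m + 4)"
  proof (rule tarski_number_geI)
    fix a b
    assume pd: "paradoxical_decomposition G a b"
    have "m + 2 \<le> a" "m + 2 \<le> b"
      using group.paradoxical_decomposition_finite_bound[OF assms(1) _ finite]
        pd paradoxical_decomposition_sym[OF pd] by blast+
    then show "2 * m + 4 \<le> a + b"
      by simp
  qed
qed

end
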